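(* Let $G$ be an $n$-node graph of maximum degree $\Delta$, and let $K$ be an almost-clique of an $\epsilon$-almost-clique decomposition of $G$ with $\epsilon=10^{-5}$. Let $k\le \Delta/(C\log n)$ be an integer, for some large enough constant $C>0$. Suppose each $v\in K$ independently samples $t(v)\in[k]$ uniformly at random, and let $T_i=\{v\in K: t(v)=i\}$ for $i\in[k]$. Then, with high probability, for every $i\in[k]$ and every $u,w\in K$, $|T_i\cap N(u)\cap N(w)|\ge (C/4)\log n$.
   Context: $N(v)$ denotes the set of neighbors of $v$ in $G$. An $\epsilon$-almost-clique decomposition is a partition of $V$ into $V_{\mathrm{sparse}},K_1,\ldots,K_k$ such that nodes in $V_{\mathrm{sparse}}$ are $\Omega(\epsilon^2\Delta)$-sparse (sparsity $\zeta_v=\frac1\Delta(\binom{\Delta}{2}-m(N(v)))$ with $m(N(v))$ the number of edges inside $N(v)$) and each almost-clique $K_i$ satisfies $|K_i|\le(1+\epsilon)\Delta$, $|N(v)\cap K_i|\ge(1-\epsilon)\Delta$ for all $v\in K_i$, and $|N(v)\cap K_i|\le(1-\epsilon/2)\Delta$ for all $v\notin K_i$. "With high probability" means with probability at least $1-n^{-c}$, where $c>0$ can be made arbitrarily large by choosing the constant $C$ large enough. *)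

theory Defs
  imports "HOL-Probability.Probability"
begin

definition simple_graph :: "'a set \<Rightarrow> ('a \<Rightarrow> 'a \<Rightarrow> bool) \<Rightarrow> bool" where
  "simple_graph V E \<longleftrightarrow> finite V \<and> V \<noteq> {} \<and>
     (\<forall>x y. E x y \<longrightarrow> x \<in> V \<and> y \<in> V) \<and>
     (\<forall>x y. E x y \<longrightarrow> E y x) \<and> (\<forall>x. \<not> E x x)"

definition nbhd :: "'a set \<Rightarrow> ('a \<Rightarrow> 'a \<Rightarrow> bool) \<Rightarrow> 'a \<Rightarrow> 'a set" where
  "nbhd V E v = {u \<in> V. E v u}"

definition max_degree :: "'a set \<Rightarrow> ('a \<Rightarrow> 'a \<Rightarrow> bool) \<Rightarrow> nat" where
  "max_degree V E = Max ((\<lambda>v. card (nbhd V E v)) ` V)"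

definition edges_inside :: "('a \<Rightarrow> 'a \<Rightarrow> bool) \<Rightarrow> 'a set \<Rightarrow> nat" where
  "edges_inside E S = card {e. \<exists>x y. e = {x, y} \<and> x \<in> S \<and> y \<in> S \<and> E x y}"

definition sparsity :: "'a set \<Rightarrow> ('a \<Rightarrow> 'a \<Rightarrow> bool) \<Rightarrow> 'a \<Rightarrow> real" where
  "sparsity V E v = (real (max_degree V E choose 2) - real (edges_inside E (nbhd V E v)))
                     / real (max_degree V E)"

text \<open>epsilon-almost-clique decomposition (V_sparse, set of almost-cliques Ks); the
  constant hidden in Omega(eps^2 Delta) is the parameter kappa > 0.\<close>
definition almost_clique_decomposition ::
  "'a set \<Rightarrow> ('a \<Rightarrow> 'a \<Rightarrow> bool) \<Rightarrow> real \<Rightarrow> real \<Rightarrow> 'a set \<Rightarrow> 'a set set \<Rightarrow> bool" where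
  "almost_clique_decomposition V E \<epsilon> \<kappa> Vs Ks \<longleftrightarrow>
     (let \<Delta> = real (max_degree V E) in
     Vs \<union> \<Union>Ks = V \<and> Vs \<inter> \<Union>Ks = {} \<and> {} \<notin> Ks \<and>
     (\<forall>K1\<in>Ks. \<forall>K2\<in>Ks. K1 \<noteq> K2 \<longrightarrow> K1 \<inter> K2 = {}) \<and>
     (\<forall>v\<in>Vs. sparsity V E v \<ge> \<kappa> * \<epsilon>\<^sup>2 * \<Delta>) \<and>
     (\<forall>K\<in>Ks. real (card K) \<le> (1 + \<epsilon>) * \<Delta> \<and>
        (\<forall>v\<in>K. real (card (nbhd V E v \<inter> K)) \<ge> (1 - \<epsilon>) * \<Delta>) \<and>
        (\<forall>v\<in>V - K. real (card (nbhd V E v \<inter> K)) \<le> (1 - \<epsilon> / 2) * \<Delta>)))"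

end

theory Submission
  imports Defs
begin

(*
  Fix i and u, w in K. The common neighbourhood of u and w inside K has at least
  (1 - 3 eps) Delta >= 0.97 k C ln n vertices, and each of them lands in T_i independently with
  probability 1/k. Bounding the indicator of "fewer than a hits" by 2 ^ (a - hits) and factorising
  the expectation of 2 ^ (- hits) over the independent choices gives the Chernoff-type tail
  2 ^ a * exp (- 0.97 C ln n / 2) <= n ^ (- C / 5). A union bound over the at most n ^ 3 triples
  (i, u, w) leaves failure probability n ^ (3 - C / 5) <= n ^ (- c) once C >= 5 (c + 3).
*)

lemma card_less_le_powr_sum:
  fixes X :: "'a \<Rightarrow> nat" and a :: real
  assumes "finite \<Omega>"
  shows "real (card {t\<in>\<Omega>. real (X t) < a}) \<le> 2 powr a * (\<Sum>t\<in>\<Omega>. (1/2) ^ X t)"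
proof -
  have "real (card {t\<in>\<Omega>. real (X t) < a}) = (\<Sum>t\<in>{t\<in>\<Omega>. real (X t) < a}. 1)"
    by simp
  also have "\<dots> \<le> (\<Sum>t\<in>{t\<in>\<Omega>. real (X t) < a}. 2 powr a * (1/2) ^ X t)"
  proof (rule sum_mono)
    fix t assume "t \<in> {t\<in>\<Omega>. real (X t) < a}"
    then have "1 \<le> 2 powr (a - real (X t))"
      by (intro ge_one_powr_ge_zero) auto
    also have "\<dots> = 2 powr a * (1/2) ^ X t"
    proof -
      have "(2::real) ^ X t = 2 powr real (X t)"
        by (rule powr_realpow[symmetric]) simp
      then show ?thesis
        unfolding power_one_over powr_diff by simp
    qed
    finally show "1 \<le> 2 powr a * (1/2) ^ X t" .
  qed
  also have "\<dots> \<le> (\<Sum>t\<in>\<Omega>. 2 powr a * (1/2) ^ X t)"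
    by (rule sum_mono2) (use assms in auto)
  finally show ?thesis
    by (simp add: sum_distrib_left)
qed

lemma sum_PiE_half_power_card_hits:
  assumes "finite K" "finite B" "i \<in> B"
  shows "(\<Sum>t\<in>PiE K (\<lambda>_. B). (1/2::real) ^ card {v\<in>K. t v = i \<and> P v})
       = (\<Prod>v\<in>K. if P v then real (card B) - 1/2 else real (card B))"
proof -
  define f where "f v b = (if P v \<and> b = i then 1/2 else (1::real))" for v b
  have "(1/2::real) ^ card {v\<in>K. t v = i \<and> P v} = (\<Prod>v\<in>K. f v (t v))" for t
  proof -
    have "(\<Prod>v\<in>K. f v (t v)) = (\<Prod>v\<in>K. if t v = i \<and> P v then 1/2 else 1)"
      unfolding f_def by (intro prod.cong) auto
    also have "\<dots> = (\<Prod>v\<in>{v\<in>K. t v = i \<and> P v}. 1/2)"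
      using assms(1) by (rule prod.inter_filter[symmetric])
    finally show ?thesis
      by simp
  qed
  moreover have "(\<Sum>b\<in>B. f v b) = (if P v then real (card B) - 1/2 else real (card B))" for v
  proof -
    have "0 < card B"
      using assms(2,3) by (auto simp: card_gt_0_iff)
    then show ?thesis
      using sum.remove[OF assms(2,3), of "f v"] assms(2,3) by (simp add: f_def of_nat_diff)
  qed
  ultimately show ?thesis
    using prod_sum_PiE[of K "\<lambda>_. B" f] assms by simp
qed

lemma prob_few_hits_le:
  fixes K :: "'a set" and B :: "'b set" and a :: real
  assumes "finite K" "finite B" "i \<in> B"
  shows "measure_pmf.prob (pmf_of_set (PiE K (\<lambda>_. B))) {t. real (card {v\<in>K. t v = i \<and> P v}) < a}
         \<le> 2 powr a * exp (- real (card {v\<in>K. P v}) / (2 * real (card B)))"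
proof -
  define \<Omega> where "\<Omega> = PiE K (\<lambda>_. B)"
  define b where "b = real (card B)"
  define m where "m = card {v\<in>K. P v}"
  have "0 < card B"
    using assms(2,3) by (auto simp: card_gt_0_iff)
  then have b: "b \<ge> 1"
    unfolding b_def by simp
  have \<Omega>: "finite \<Omega>" "\<Omega> \<noteq> {}" "real (card \<Omega>) = b ^ card K"
    using assms by (auto simp: \<Omega>_def b_def finite_PiE card_PiE PiE_eq_empty_iff)
  have "(\<Sum>t\<in>\<Omega>. (1/2::real) ^ card {v\<in>K. t v = i \<and> P v})
      = (\<Prod>v\<in>K. b * (if P v then 1 - 1/(2*b) else 1))"
    unfolding \<Omega>_def sum_PiE_half_power_card_hits[OF assms] b_def
    using b by (intro prod.cong) (auto simp: b_def field_simps)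
  also have "\<dots> = b ^ card K * (1 - 1/(2*b)) ^ m"
    using assms(1) by (simp add: prod.distrib prod.inter_filter[symmetric] m_def)
  also have "\<dots> \<le> b ^ card K * exp (- real m / (2 * b))"
  proof -
    have "(1 - 1/(2*b)) ^ m \<le> exp (- 1/(2*b)) ^ m"
      using b exp_minus_ge[of "1/(2*b)"] by (intro power_mono) (simp_all add: field_simps)
    then show ?thesis
      using b by (simp add: exp_of_nat_mult[symmetric])
  qed
  finally have sum_le: "(\<Sum>t\<in>\<Omega>. (1/2::real) ^ card {v\<in>K. t v = i \<and> P v})
      \<le> real (card \<Omega>) * exp (- real m / (2 * b))"
    using \<Omega>(3) by simp
  have "measure_pmf.prob (pmf_of_set \<Omega>) {t. real (card {v\<in>K. t v = i \<and> P v}) < a}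
      = real (card {t\<in>\<Omega>. real (card {v\<in>K. t v = i \<and> P v}) < a}) / real (card \<Omega>)"
    using measure_pmf_of_set[OF \<Omega>(2,1)] by (simp add: Int_def)
  also have "\<dots> \<le> 2 powr a * (real (card \<Omega>) * exp (- real m / (2 * b))) / real (card \<Omega>)"
    using order.trans[OF card_less_le_powr_sum[OF \<Omega>(1)] mult_left_mono[OF sum_le]]
    by (intro divide_right_mono) simp_all
  also have "\<dots> = 2 powr a * exp (- real m / (2 * b))"
    using \<Omega>(3) b by simp
  finally show ?thesis
    unfolding \<Omega>_def m_def b_def .
qed

lemma measure_pmf_prob_all_ge:
  assumes "finite I" and "\<And>j. j \<in> I \<Longrightarrow> measure_pmf.prob p {x. \<not> Q j x} \<le> \<delta>"
  shows "1 - real (card I) * \<delta> \<le> measure_pmf.prob p {x. \<forall>j\<in>I. Q j x}"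
proof -
  have "measure_pmf.prob p (\<Union>j\<in>I. {x. \<not> Q j x}) \<le> (\<Sum>j\<in>I. measure_pmf.prob p {x. \<not> Q j x})"
    using assms(1) by (intro measure_pmf.finite_measure_subadditive_finite) auto
  also have "\<dots> \<le> real (card I) * \<delta>"
    using assms(2) by (rule sum_bounded_above)
  moreover have "{x. \<forall>j\<in>I. Q j x} = space (measure_pmf p) - (\<Union>j\<in>I. {x. \<not> Q j x})"
    by auto
  ultimately show ?thesis
    using measure_pmf.prob_compl[of "\<Union>j\<in>I. {x. \<not> Q j x}" p] by simp
qed

lemma card_add_le_card_Int:
  assumes "finite S" "A \<subseteq> S" "B \<subseteq> S"
  shows "card A + card B \<le> card S + card (A \<inter> B)"
proof -
  have "card A + card B = card (A \<union> B) + card (A \<inter> B)"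
    using assms by (intro card_Un_Int) (auto intro: finite_subset)
  moreover have "card (A \<union> B) \<le> card S"
    using assms by (intro card_mono) auto
  ultimately show ?thesis
    by simp
qed

lemma max_degree_le_card:
  assumes "finite V" "V \<noteq> {}"
  shows "max_degree V E \<le> card V"
  using assms unfolding max_degree_def by (auto intro!: card_mono simp: nbhd_def)

lemma almost_clique_decompositionD:
  assumes "almost_clique_decomposition V E \<epsilon> \<kappa> Vs Ks" "K \<in> Ks"
  shows "K \<subseteq> V" and "real (card K) \<le> (1 + \<epsilon>) * real (max_degree V E)"
    and "\<And>v. v \<in> K \<Longrightarrow> (1 - \<epsilon>) * real (max_degree V E) \<le> real (card {u\<in>K. E v u})"
proof -
  show KV: "K \<subseteq> V"
    using assms unfolding almost_clique_decomposition_def Let_def by auto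
  show "real (card K) \<le> (1 + \<epsilon>) * real (max_degree V E)"
    using assms unfolding almost_clique_decomposition_def Let_def by auto
  fix v assume "v \<in> K"
  then have "(1 - \<epsilon>) * real (max_degree V E) \<le> real (card (nbhd V E v \<inter> K))"
    using assms unfolding almost_clique_decomposition_def Let_def by auto
  moreover have "nbhd V E v \<inter> K = {u\<in>K. E v u}"
    using KV unfolding nbhd_def by auto
  ultimately show "(1 - \<epsilon>) * real (max_degree V E) \<le> real (card {u\<in>K. E v u})"
    by simp
qed

lemma almost_clique_common_nbhd:
  assumes "finite V" "almost_clique_decomposition V E \<epsilon> \<kappa> Vs Ks" "K \<in> Ks" "u \<in> K" "w \<in> K"
  shows "(1 - 3 * \<epsilon>) * real (max_degree V E) \<le> real (card {v\<in>K. E u v \<and> E w v})"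
proof -
  note K = almost_clique_decompositionD[OF assms(2,3)]
  have "card {v\<in>K. E u v} + card {v\<in>K. E w v} \<le> card K + card {v\<in>K. E u v \<and> E w v}"
    using card_add_le_card_Int[of K "{v\<in>K. E u v}" "{v\<in>K. E w v}"] K(1) assms(1)
    by (simp add: finite_subset Collect_conj_eq Int_assoc Int_left_commute)
  then show ?thesis
    using K(2) K(3)[OF assms(4)] K(3)[OF assms(5)] by (simp add: algebra_simps)
qed

lemma le_divide_imp_pos_divisor:
  fixes x y z :: real
  assumes "1 \<le> x" "x \<le> y / z" "0 \<le> y"
  shows "0 < z" and "x * z \<le> y"
proof -
  show "0 < z"
  proof (rule ccontr)
    assume "\<not> 0 < z"
    then have "y / z \<le> 0"
      using assms(3) by (simp add: divide_nonneg_nonpos)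
    then show False
      using assms(1,2) by simp
  qed
  then show "x * z \<le> y"
    using assms(2) by (simp add: pos_le_divide_eq)
qed

lemma two_powr_le_exp:
  fixes a :: real
  assumes "0 \<le> a"
  shows "2 powr a \<le> exp a"
proof -
  have "2 powr a = exp (a * ln 2)"
    by (simp add: powr_def)
  also have "\<dots> \<le> exp a"
    using assms ln_2_less_1 by (simp add: mult_left_le)
  finally show ?thesis .
qed

lemma prob_few_common_nbhd_hits_le:
  fixes V :: "'a set" and k :: nat and C :: real
  assumes D: "almost_clique_decomposition V E \<epsilon> \<kappa> Vs Ks" and \<epsilon>: "\<epsilon> \<le> 1/100"
    and K: "K \<in> Ks" and u: "u \<in> K" and w: "w \<in> K" and i: "i \<in> {1..k}" and k: "1 \<le> k"
    and k_le: "real k \<le> real (max_degree V E) / (C * ln (real (card V)))"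
  shows "measure_pmf.prob (pmf_of_set (PiE K (\<lambda>_. {1..k})))
           {t. real (card {v\<in>K. t v = i \<and> E u v \<and> E w v}) < C / 4 * ln (real (card V))}
         \<le> real (card V) powr (- C / 5)"
proof -
  define n where "n = real (card V)"
  define L where "L = ln n"
  define \<Delta> where "\<Delta> = real (max_degree V E)"
  define s where "s = real (card {v\<in>K. E u v \<and> E w v})"
  have CL: "0 < C * L" and kCL: "real k * (C * L) \<le> \<Delta>"
    using le_divide_imp_pos_divisor[of "real k"] k k_le by (simp_all add: n_def L_def \<Delta>_def)
  then have "card V \<noteq> 0"
    by (intro notI) (simp add: L_def n_def)
  then have "finite V"
    by (simp add: card_eq_0_iff)
  have "97/100 * \<Delta> \<le> (1 - 3 * \<epsilon>) * \<Delta>"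
    using \<epsilon> by (intro mult_right_mono) (simp_all add: \<Delta>_def)
  also have "\<dots> \<le> s"
    unfolding \<Delta>_def s_def using almost_clique_common_nbhd[OF \<open>finite V\<close> D K u w] .
  finally have "97/100 * (real k * (C * L)) \<le> s"
    using kCL by linarith
  then have s_ge: "97/200 * (C * L) \<le> s / (2 * real k)"
    using k by (simp add: field_simps)
  have "measure_pmf.prob (pmf_of_set (PiE K (\<lambda>_. {1..k})))
           {t. real (card {v\<in>K. t v = i \<and> E u v \<and> E w v}) < C / 4 * L}
        \<le> 2 powr (C / 4 * L) * exp (- s / (2 * real k))"
    using prob_few_hits_le[of K "{1..k}" i "\<lambda>v. E u v \<and> E w v" "C / 4 * L"]
      \<open>finite V\<close> almost_clique_decompositionD(1)[OF D K] i
    by (simp add: s_def finite_subset)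
  also have "\<dots> \<le> exp (C / 4 * L) * exp (- s / (2 * real k))"
    using CL by (intro mult_right_mono two_powr_le_exp) simp_all
  also have "\<dots> \<le> exp (- C / 5 * L)"
    \<comment> \<open>since 1/4 - 97/200 < - 1/5\<close>
    unfolding mult_exp_exp using s_ge CL by simp
  also have "\<dots> = n powr (- C / 5)"
    using \<open>card V \<noteq> 0\<close> by (simp add: powr_def L_def n_def)
  finally show ?thesis
    unfolding n_def L_def .
qed

lemma card_ge_if_le_max_degree_div_ln:
  fixes V :: "'a set" and k :: nat and C :: real
  assumes k: "1 \<le> k" and k_le: "real k \<le> real (max_degree V E) / (C * ln (real (card V)))"
    and C: "15 \<le> C"
  shows "2 \<le> card V" and "k \<le> card V"
proof -
  define n where "n = real (card V)"
  have CL: "0 < C * ln n" and kCL: "real k * (C * ln n) \<le> real (max_degree V E)"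
    using le_divide_imp_pos_divisor[of "real k"] k k_le by (simp_all add: n_def)
  have "card V \<noteq> 0"
    using CL by (intro notI) (simp add: n_def)
  moreover have "card V \<noteq> 1"
    using CL by (intro notI) (simp add: n_def)
  ultimately show "2 \<le> card V"
    by linarith
  then have V: "finite V" "V \<noteq> {}"
    by (auto simp: card_ge_0_finite)
  have "2 \<le> n"
    using \<open>2 \<le> card V\<close> by (simp add: n_def)
  then have "2/3 \<le> ln n"
    using ln2_ge_two_thirds ln_le_cancel_iff[of 2 n] by linarith
  then have "1 \<le> C * ln n"
    using C by (intro order.trans[OF _ mult_mono[of 15 C "2/3"]]) simp_all
  then have "real k \<le> real (max_degree V E)"
    using kCL mult_left_mono[of 1 "C * ln n" "real k"] by simp
  then show "k \<le> card V"
    using max_degree_le_card[OF V, of E] by simp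
qed

lemma random_partition_common_nbhd_whp:
  fixes V :: "'a set" and k :: nat and c C :: real
  assumes c: "0 \<le> c" and C: "5 * (c + 3) \<le> C"
    and D: "almost_clique_decomposition V E \<epsilon> \<kappa> Vs Ks" and \<epsilon>: "\<epsilon> \<le> 1/100"
    and K: "K \<in> Ks" and k: "1 \<le> k"
    and k_le: "real k \<le> real (max_degree V E) / (C * ln (real (card V)))"
  shows "1 - real (card V) powr (- c) \<le> measure_pmf.prob (pmf_of_set (PiE K (\<lambda>_. {1..k})))
           {t. \<forall>i\<in>{1..k}. \<forall>u\<in>K. \<forall>w\<in>K.
              C / 4 * ln (real (card V)) \<le> real (card {v \<in> K. t v = i \<and> E u v \<and> E w v})}"
proof -
  define n where "n = real (card V)"
  define I where "I = {1..k} \<times> K \<times> K"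
  define good where "good = (\<lambda>(i, u, w) (t :: 'a \<Rightarrow> nat).
    C / 4 * ln n \<le> real (card {v \<in> K. t v = i \<and> E u v \<and> E w v}))"
  have "2 \<le> card V" and "k \<le> card V"
    using card_ge_if_le_max_degree_div_ln[OF k k_le] C c by simp_all
  then have V: "finite V" and "2 \<le> n" and "real k \<le> n"
    by (simp_all add: n_def card_ge_0_finite)
  moreover have "real (card K) \<le> n"
    using card_mono[OF V almost_clique_decompositionD(1)[OF D K]] by (simp add: n_def)
  ultimately have "real (card I) \<le> n * (n * n)"
    by (simp add: I_def card_cartesian_product mult_mono)
  also have "\<dots> = n powr 3"
    using \<open>2 \<le> n\<close> by (simp add: powr_numeral power3_eq_cube)
  finally have "real (card I) \<le> n powr 3" .
  have "1 - n powr (- c) \<le> 1 - real (card I) * n powr (- C / 5)"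
  proof -
    have "real (card I) * n powr (- C / 5) \<le> n powr 3 * n powr (- C / 5)"
      using \<open>real (card I) \<le> n powr 3\<close> by (rule mult_right_mono) simp
    also have "\<dots> \<le> n powr (- c)"
      unfolding powr_add[symmetric] using \<open>2 \<le> n\<close> C by (intro powr_mono) simp_all
    finally show ?thesis
      by simp
  qed
  also have "\<dots> \<le> measure_pmf.prob (pmf_of_set (PiE K (\<lambda>_. {1..k}))) {t. \<forall>j\<in>I. good j t}"
  proof (rule measure_pmf_prob_all_ge)
    show "finite I"
      using V almost_clique_decompositionD(1)[OF D K] by (simp add: I_def finite_subset)
    fix j assume "j \<in> I"
    then show "measure_pmf.prob (pmf_of_set (PiE K (\<lambda>_. {1..k}))) {t. \<not> good j t} \<le> n powr (- C / 5)"
      using prob_few_common_nbhd_hits_le[OF D \<epsilon> K _ _ _ k k_le]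
      by (auto simp: I_def good_def n_def not_le)
  qed
  also have "{t. \<forall>j\<in>I. good j t} = {t. \<forall>i\<in>{1..k}. \<forall>u\<in>K. \<forall>w\<in>K.
      C / 4 * ln n \<le> real (card {v \<in> K. t v = i \<and> E u v \<and> E w v})}"
    by (auto simp: I_def good_def)
  finally show ?thesis
    unfolding n_def .
qed

theorem lemma4p1:
  "\<forall>c>0. \<exists>C0>0. \<forall>C\<ge>C0.
     \<forall>(V :: nat set) E Vs Ks K \<kappa> (k :: nat).
       simple_graph V E \<longrightarrow> \<kappa> > 0 \<longrightarrow>
       almost_clique_decomposition V E (10 powr (-5)) \<kappa> Vs Ks \<longrightarrow> K \<in> Ks \<longrightarrow>
       k \<ge> 1 \<longrightarrow> real k \<le> real (max_degree V E) / (C * ln (real (card V))) \<longrightarrow>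
       measure_pmf.prob (pmf_of_set (PiE K (\<lambda>_. {1..k})))
         {t. \<forall>i\<in>{1..k}. \<forall>u\<in>K. \<forall>w\<in>K.
              real (card {v \<in> K. t v = i \<and> E u v \<and> E w v}) \<ge> (C / 4) * ln (real (card V))}
       \<ge> 1 - real (card V) powr (- c)"
proof -
  have "10 powr (-5) \<le> (1/100 :: real)"
    by (simp add: powr_minus_divide powr_numeral)
  then show ?thesis
    apply (intro allI impI)
    subgoal for c
      by (intro exI[of _ "5 * (c + 3)"] conjI allI impI random_partition_common_nbhd_whp) simp_all
    done
qed

end
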